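(* Let $\rho_{AB}$ be an arbitrary two-qubit state (a density operator on $\mathbb{C}^2\otimes\mathbb{C}^2$) shared between Alice (system $A$) and Bob (system $B$). Let $\rho_A=\operatorname{Tr}_B[\rho_{AB}]$ and $\rho_B=\operatorname{Tr}_A[\rho_{AB}]$, and let $\mathbb{I}$ denote the $2\times 2$ identity. For $\mu_1,\mu_2\in[0,\tfrac{1}{\sqrt{3}}]$ define $$\tau^1_{AB}=\mu_1\,\rho_{AB}+(1-\mu_1)\,\rho_A\otimes\tfrac{\mathbb{I}}{2},\qquad \tau^2_{AB}=\mu_2\,\rho_{AB}+(1-\mu_2)\,\tfrac{\mathbb{I}}{2}\otimes\rho_B .$$ Then: (i) if $\tau^1_{AB}$ is entangled, $\rho_{AB}$ is EPR steerable from Bob to Alice; (ii) if $\tau^2_{AB}$ is entangled, $\rho_{AB}$ is EPR steerable from Alice to Bob.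
   Context: Measurements: Alice performs arbitrary measurements $A$ given by POVMs $\{M^A_a\}_a$ ($M^A_a\ge 0$, $\sum_a M^A_a=\mathbb{I}$), Bob performs arbitrary measurements $B$ given by POVMs $\{M^B_b\}_b$. On a state $\rho_{AB}$ the joint probabilities are $P(a,b|A,B,\rho_{AB})=\operatorname{Tr}[(M^A_a\otimes M^B_b)\rho_{AB}]$. For a state $\sigma$, $P_Q(a|A,\sigma)=\operatorname{Tr}[\sigma M^A_a]$ (similarly for Bob). Steering: $\rho_{AB}$ is NOT EPR steerable from Bob to Alice iff there exist a probability distribution $P(\lambda)$ over hidden variables $\lambda$, quantum states $\rho^A_\lambda$ on Alice's system, and arbitrary conditional probability distributions $P(b|B,\lambda)$ such that for all measurements $A,B$ and outcomes $a,b$: $P(a,b|A,B,\rho_{AB})=\sum_\lambda P(\lambda)\,P_Q(a|A,\rho^A_\lambda)\,P(b|B,\lambda)$; otherwise it is EPR steerable from Bob to Alice. Symmetrically, $\rho_{AB}$ is NOT EPR steerable from Alice to Bob iff for all $A,B,a,b$: $P(a,b|A,B,\rho_{AB})=\sum_\lambda P(\lambda)\,P(a|A,\lambda)\,P_Q(b|B,\rho^B_\lambda)$ with $P(a|A,\lambda)$ arbitrary distributions and $\rho^B_\lambda$ quantum states of Bob's system; otherwise it is EPR steerable from Alice to Bob. Entanglement: a bipartite state is separable if it can be written as $\sum_\lambda P(\lambda)\rho^A_\lambda\otimes\rho^B_\lambda$ (equivalently, its statistics for all local measurements admit the form $\sum_\lambda P(\lambda)P_Q(a|A,\rho^A_\lambda)P_Q(b|B,\rho^B_\lambda)$),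 and entangled otherwise. *)

theory Defs
  imports "HOL-Analysis.Analysis"
begin

text \<open>Qubit operators: 2x2 complex matrices; two-qubit operators: matrices indexed by 2 \<times> 2
  (the computational basis of C^2 \<otimes> C^2).\<close>

type_synonym cmat2 = "complex^2^2"
type_synonym cmat4 = "complex^(2 \<times> 2)^(2 \<times> 2)"

definition ctrace :: "complex^'n^'n \<Rightarrow> complex" where
  "ctrace A = (\<Sum>i\<in>UNIV. A $ i $ i)"

definition psd :: "complex^'n^'n \<Rightarrow> bool" where
  "psd M \<longleftrightarrow> (\<forall>x::complex^'n.
      Im ((\<Sum>i\<in>UNIV. cnj (x $ i) * (M *v x) $ i)) = 0 \<and>
      Re ((\<Sum>i\<in>UNIV. cnj (x $ i) * (M *v x) $ i)) \<ge> 0)"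

definition density :: "complex^'n^'n \<Rightarrow> bool" where
  "density \<rho> \<longleftrightarrow> psd \<rho> \<and> ctrace \<rho> = 1"

definition kron :: "cmat2 \<Rightarrow> cmat2 \<Rightarrow> cmat4" where
  "kron A B = (\<chi> p q. A $ fst p $ fst q * B $ snd p $ snd q)"

definition ptraceB :: "cmat4 \<Rightarrow> cmat2" where
  "ptraceB \<rho> = (\<chi> i j. \<Sum>k\<in>UNIV. \<rho> $ (i,k) $ (j,k))"

definition ptraceA :: "cmat4 \<Rightarrow> cmat2" where
  "ptraceA \<rho> = (\<chi> k l. \<Sum>i\<in>UNIV. \<rho> $ (i,k) $ (i,l))"

definition povm :: "nat \<Rightarrow> (nat \<Rightarrow> cmat2) \<Rightarrow> bool" where
  "povm n M \<longleftrightarrow> (\<forall>a<n. psd (M a)) \<and> (\<Sum>a<n. M a) = mat 1"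

definition Pjoint :: "cmat2 \<Rightarrow> cmat2 \<Rightarrow> cmat4 \<Rightarrow> real" where
  "Pjoint MA MB \<rho> = Re (ctrace (kron MA MB ** \<rho>))"

definition PQ :: "cmat2 \<Rightarrow> cmat2 \<Rightarrow> real" where
  "PQ \<sigma> M = Re (ctrace (\<sigma> ** M))"

text \<open>Discrete probability distribution over the hidden variables (indexed by nat; any
  discrete distribution has countable support).\<close>
definition hv_dist :: "(nat \<Rightarrow> real) \<Rightarrow> bool" where
  "hv_dist P \<longleftrightarrow> (\<forall>l. 0 \<le> P l) \<and> P sums 1"

text \<open>Arbitrary response function: r n M b l = P(b | measurement (n,M), \<lambda> = l).\<close>
definition response :: "(nat \<Rightarrow> (nat \<Rightarrow> cmat2) \<Rightarrow> nat \<Rightarrow> nat \<Rightarrow> real) \<Rightarrow> bool" where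
  "response r \<longleftrightarrow> (\<forall>n M l. povm n M \<longrightarrow> (\<forall>b<n. 0 \<le> r n M b l) \<and> (\<Sum>b<n. r n M b l) = 1)"

definition not_steerable_BA :: "cmat4 \<Rightarrow> bool" where
  "not_steerable_BA \<rho> \<longleftrightarrow> (\<exists>P \<sigma> r. hv_dist P \<and> (\<forall>l. density (\<sigma> l)) \<and> response r \<and>
     (\<forall>nA MA nB MB a b. povm nA MA \<longrightarrow> povm nB MB \<longrightarrow> a < nA \<longrightarrow> b < nB \<longrightarrow>
        (\<lambda>l. P l * PQ (\<sigma> l) (MA a) * r nB MB b l) sums Pjoint (MA a) (MB b) \<rho>))"

definition steerable_BA :: "cmat4 \<Rightarrow> bool" where
  "steerable_BA \<rho> \<longleftrightarrow> \<not> not_steerable_BA \<rho>"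

definition not_steerable_AB :: "cmat4 \<Rightarrow> bool" where
  "not_steerable_AB \<rho> \<longleftrightarrow> (\<exists>P \<sigma> r. hv_dist P \<and> (\<forall>l. density (\<sigma> l)) \<and> response r \<and>
     (\<forall>nA MA nB MB a b. povm nA MA \<longrightarrow> povm nB MB \<longrightarrow> a < nA \<longrightarrow> b < nB \<longrightarrow>
        (\<lambda>l. P l * r nA MA a l * PQ (\<sigma> l) (MB b)) sums Pjoint (MA a) (MB b) \<rho>))"

definition steerable_AB :: "cmat4 \<Rightarrow> bool" where
  "steerable_AB \<rho> \<longleftrightarrow> \<not> not_steerable_AB \<rho>"

definition separable :: "cmat4 \<Rightarrow> bool" where
  "separable \<rho> \<longleftrightarrow> (\<exists>P \<sigma>A \<sigma>B. hv_dist P \<and> (\<forall>l. density (\<sigma>A l)) \<and> (\<forall>l. density (\<sigma>B l)) \<and>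
     (\<lambda>l. P l *\<^sub>R kron (\<sigma>A l) (\<sigma>B l)) sums \<rho>)"

definition entangled :: "cmat4 \<Rightarrow> bool" where
  "entangled \<rho> \<longleftrightarrow> \<not> separable \<rho>"

end

theory Submission imports Defs begin

text \<open>Suppose \<rho> admits a local hidden state model from Bob to Alice: weights P(l), Alice states
  \<sigma>(l) and Bob responses r. Qubit tomography turns the model into an operator identity: for every
  Bob effect E, the sum over l of P(l) r(E,l) \<sigma>(l) equals Alice's conditional operator
  Tr_B[(I \<otimes> E) \<rho>]. Expanding \<rho> in the Pauli basis of Bob's qubit,
  \<rho> = (\<rho>_A \<otimes> I + \<Sum>_k Tr_B[(I \<otimes> \<sigma>_k) \<rho>] \<otimes> \<sigma>_k) / 2, and evaluating the identity at the
  projective Pauli measurements gives \<tau>1 = \<Sum>_l P(l) \<sigma>(l) \<otimes> (I + \<mu> \<Sum>_k s_k(l) \<sigma>_k) / 2, where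
  s_k(l) \<in> [-1,1] is the expected \<plusminus>1 outcome of Bob's k-th Pauli measurement. The Bloch vector
  \<mu> s(l) has length at most \<mu> sqrt 3 \<le> 1, so the Bob factors are states and \<tau>1 is separable.
  The second claim follows by exchanging the parties.\<close>

lemma UNIV_2x2: "(UNIV :: (2 \<times> 2) set) = {(1,1), (1,2), (2,1), (2,2)}"
  using exhaust_2 by auto

lemma sum_UNIV_2x2: "sum f (UNIV :: (2 \<times> 2) set) = f (1,1) + f (1,2) + f (2,1) + f (2,2)"
  unfolding UNIV_2x2 by (simp add: add.assoc)

lemma all_2x2: "(\<forall>p :: 2 \<times> 2. P p) \<longleftrightarrow> P (1,1) \<and> P (1,2) \<and> P (2,1) \<and> P (2,2)"
  using UNIV_2x2 by (metis UNIV_I insertCI insertE empty_iff)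

lemma scaleR_complex: "(c :: real) *\<^sub>R (z :: complex) = complex_of_real c * z"
  by (rule scaleR_conv_of_real)

subsection \<open>Positive semidefinite matrices\<close>

definition hermitian :: "complex^'n^'n \<Rightarrow> bool" where
  "hermitian M \<longleftrightarrow> (\<forall>i j. M $ j $ i = cnj (M $ i $ j))"

definition quad_form :: "complex^'n^'n \<Rightarrow> complex^'n \<Rightarrow> complex" where
  "quad_form M x = (\<Sum>i\<in>UNIV. cnj (x $ i) * (M *v x) $ i)"

lemma quad_form_axis: "quad_form M (axis i 1) = M $ i $ i"
proof -
  have e: "axis i 1 $ k = (if k = i then 1 else 0)" for k
    by (simp add: axis_def)
  have "(M *v axis i 1) $ k = (\<Sum>l\<in>UNIV. if l = i then M $ k $ i else 0)" for k
    unfolding matrix_vector_mult_def e vec_lambda_beta by (intro sum.cong) auto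
  then have "quad_form M (axis i 1) = (\<Sum>k\<in>UNIV. if k = i then M $ k $ i else 0)"
    unfolding quad_form_def e by (intro sum.cong) auto
  then show ?thesis by simp
qed

lemma quad_form_axis_add:
  assumes "i \<noteq> j"
  shows "quad_form M (axis i 1 + axis j w)
       = M $ i $ i + w * M $ i $ j + cnj w * M $ j $ i + cnj w * w * M $ j $ j"
proof -
  let ?x = "axis i 1 + axis j w"
  have x: "?x $ k = (if k = i then 1 else 0) + (if k = j then w else 0)" for k
    by (simp add: axis_def)
  have Mx: "(M *v ?x) $ k = M $ k $ i + M $ k $ j * w" for k
  proof -
    have "(M *v ?x) $ k
        = (\<Sum>l\<in>UNIV. (if l = i then M $ k $ i else 0) + (if l = j then M $ k $ j * w else 0))"
      unfolding matrix_vector_mult_def x vec_lambda_beta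
      by (intro sum.cong) (auto simp: distrib_left)
    then show ?thesis by (simp add: sum.distrib)
  qed
  have "quad_form M ?x = (\<Sum>k\<in>UNIV. (if k = i then M $ k $ i + M $ k $ j * w else 0)
      + (if k = j then cnj w * (M $ k $ i + M $ k $ j * w) else 0))"
    unfolding quad_form_def Mx x by (intro sum.cong) (auto simp: distrib_right)
  then show ?thesis
    using assms by (simp add: sum.distrib algebra_simps)
qed

lemma psd_imp_hermitian:
  assumes "psd M"
  shows "hermitian M"
  unfolding hermitian_def
proof (intro allI)
  fix i j
  have real: "Im (quad_form M x) = 0" for x
    using assms unfolding psd_def quad_form_def by blast
  have diag: "Im (M $ k $ k) = 0" for k
    using real[of "axis k 1"] by (simp add: quad_form_axis)
  show "M $ j $ i = cnj (M $ i $ j)"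
  proof (cases "i = j")
    case True
    then show ?thesis using diag[of i] by (simp add: complex_eq_iff)
  next
    case False
    \<comment> \<open>test vectors e_i + e_j and e_i + \<i> e_j\<close>
    have "Im (M $ i $ j + M $ j $ i) = 0"
      using real[of "axis i 1 + axis j 1"] quad_form_axis_add[OF False, of M 1] diag[of i] diag[of j]
      by simp
    moreover have "Re (M $ i $ j - M $ j $ i) = 0"
      using real[of "axis i 1 + axis j \<i>"] quad_form_axis_add[OF False, of M \<i>] diag[of i] diag[of j]
      by simp
    ultimately show ?thesis by (simp add: complex_eq_iff)
  qed
qed

lemma psd_cmat2I:
  fixes M :: cmat2
  assumes M: "M $ 1 $ 1 = complex_of_real a" "M $ 2 $ 2 = complex_of_real d"
      "M $ 2 $ 1 = cnj (M $ 1 $ 2)"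
    and nonneg: "0 \<le> a" "0 \<le> d" and det: "(cmod (M $ 1 $ 2))\<^sup>2 \<le> a * d"
  shows "psd M"
  unfolding psd_def
proof
  fix x :: "complex^2"
  let ?z = "cnj (x $ 1) * M $ 1 $ 2 * x $ 2"
  have form: "(\<Sum>i\<in>UNIV. cnj (x $ i) * (M *v x) $ i)
      = complex_of_real (a * (cmod (x $ 1))\<^sup>2 + d * (cmod (x $ 2))\<^sup>2 + 2 * Re ?z)"
    unfolding cmod_power2
    by (simp add: matrix_vector_mult_def sum_2 M complex_eq_iff algebra_simps power2_eq_square)
  have "cmod (M $ 1 $ 2) \<le> sqrt (a * d)"
    using det real_le_rsqrt by blast
  then have "cmod ?z \<le> cmod (x $ 1) * sqrt (a * d) * cmod (x $ 2)"
    by (simp add: norm_mult mult_left_mono mult_right_mono)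
  with abs_Re_le_cmod[of ?z] have "- Re ?z \<le> cmod (x $ 1) * sqrt (a * d) * cmod (x $ 2)"
    by linarith
  also have "\<dots> = (sqrt a * cmod (x $ 1)) * (sqrt d * cmod (x $ 2))"
    by (simp add: real_sqrt_mult)
  also have "\<dots> \<le> ((sqrt a * cmod (x $ 1))\<^sup>2 + (sqrt d * cmod (x $ 2))\<^sup>2) / 2"
    using sum_squares_bound[of "sqrt a * cmod (x $ 1)" "sqrt d * cmod (x $ 2)"] by simp
  also have "\<dots> = (a * (cmod (x $ 1))\<^sup>2 + d * (cmod (x $ 2))\<^sup>2) / 2"
    using nonneg by (simp add: power_mult_distrib)
  finally show "Im (\<Sum>i\<in>UNIV. cnj (x $ i) * (M *v x) $ i) = 0
      \<and> 0 \<le> Re (\<Sum>i\<in>UNIV. cnj (x $ i) * (M *v x) $ i)"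
    unfolding form by simp
qed

subsection \<open>Pauli matrices and qubit tomography\<close>

definition sx :: cmat2 where "sx = (\<chi> i j. if i = j then 0 else 1)"
definition sy :: cmat2 where "sy = (\<chi> i j. if i = j then 0 else if i = 1 then -\<i> else \<i>)"
definition sz :: cmat2 where "sz = (\<chi> i j. if i = j then (if i = 1 then 1 else -1) else 0)"

definition bloch_op :: "real \<Rightarrow> real \<Rightarrow> real \<Rightarrow> real \<Rightarrow> cmat2" where
  "bloch_op t x y z = (1/2::real) *\<^sub>R (t *\<^sub>R mat 1 + x *\<^sub>R sx + y *\<^sub>R sy + z *\<^sub>R sz)"

lemma bloch_op_sums:
  assumes "t sums t'" "x sums x'" "y sums y'" "z sums z'"
  shows "(\<lambda>l. bloch_op (t l) (x l) (y l) (z l)) sums bloch_op t' x' y' z'"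
  unfolding bloch_op_def
  by (intro sums_scaleR_right sums_add sums_scaleR_left assms)

lemma scaleR_bloch_op: "c *\<^sub>R bloch_op t x y z = bloch_op (c * t) (c * x) (c * y) (c * z)"
  by (simp add: bloch_op_def scaleR_add_right)

lemma hermitian_eq_bloch_op:
  assumes "hermitian Y"
  shows "Y = bloch_op (PQ Y (mat 1)) (PQ Y sx) (PQ Y sy) (PQ Y sz)"
proof -
  have "Y $ 2 $ 1 = cnj (Y $ 1 $ 2)" "Y $ 1 $ 1 = cnj (Y $ 1 $ 1)" "Y $ 2 $ 2 = cnj (Y $ 2 $ 2)"
    using assms unfolding hermitian_def by blast+
  then show ?thesis
    unfolding vec_eq_iff forall_2
    by (simp add: bloch_op_def PQ_def ctrace_def matrix_matrix_mult_def sum_2 mat_def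
        sx_def sy_def sz_def complex_eq_iff)
qed

lemma density_bloch_op:
  assumes "x\<^sup>2 + y\<^sup>2 + z\<^sup>2 \<le> 1"
  shows "density (bloch_op 1 x y z)"
proof -
  have "z\<^sup>2 \<le> 1" using assms zero_le_power2[of x] zero_le_power2[of y] by linarith
  then have z: "\<bar>z\<bar> \<le> 1" by (simp add: abs_square_le_1)
  let ?B = "bloch_op 1 x y z"
  have entries: "?B $ 1 $ 1 = complex_of_real ((1 + z) / 2)" "?B $ 2 $ 2 = complex_of_real ((1 - z) / 2)"
      "?B $ 2 $ 1 = cnj (?B $ 1 $ 2)" "?B $ 1 $ 2 = Complex (x / 2) (- (y / 2))"
    by (simp_all add: bloch_op_def mat_def sx_def sy_def sz_def scaleR_complex complex_eq_iff
        add_divide_distrib diff_divide_distrib)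
  have "psd ?B"
  proof (rule psd_cmat2I[OF entries(1-3)])
    show "(cmod (?B $ 1 $ 2))\<^sup>2 \<le> (1 + z) / 2 * ((1 - z) / 2)"
      using assms unfolding entries(4) cmod_power2 by (simp add: power2_eq_square field_simps)
  qed (use z in auto)
  moreover have "ctrace ?B = 1"
    unfolding ctrace_def sum_2 entries(1,2) by (simp add: field_simps)
  ultimately show ?thesis unfolding density_def by simp
qed

definition proj :: "cmat2 \<Rightarrow> cmat2" where
  "proj S = (1/2::real) *\<^sub>R (mat 1 + S)"

definition two_outcome :: "cmat2 \<Rightarrow> nat \<Rightarrow> cmat2" where
  "two_outcome Q = (\<lambda>a. if a = 0 then Q else mat 1 - Q)"

lemma proj_diff: "proj S - (mat 1 - proj S) = S"
  unfolding proj_def vec_eq_iff by (simp add: algebra_simps scaleR_complex)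

lemma povm_two_outcome: "psd Q \<Longrightarrow> psd (mat 1 - Q) \<Longrightarrow> povm 2 (two_outcome Q)"
  unfolding povm_def two_outcome_def by (auto simp: numeral_2_eq_2 less_Suc_eq)

lemma psd_mat1: "psd (mat 1 :: cmat2)"
  by (rule psd_cmat2I[where a = 1 and d = 1]) (auto simp: mat_def)

lemma povm_trivial: "povm 1 (\<lambda>_. mat 1)"
  unfolding povm_def using psd_mat1 by simp

lemma psd_proj_pauli:
  "psd (proj sx)" "psd (mat 1 - proj sx)" "psd (proj sy)" "psd (mat 1 - proj sy)"
  "psd (proj sz)" "psd (mat 1 - proj sz)"
  by (rule psd_cmat2I[where a = "1/2" and d = "1/2"] psd_cmat2I[where a = 1 and d = 0]
        psd_cmat2I[where a = 0 and d = 1];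
      simp add: proj_def sx_def sy_def sz_def mat_def cmod_def power2_eq_square complex_eq_iff)+

lemma PQ_diff: "PQ \<sigma> (A - B) = PQ \<sigma> A - PQ \<sigma> B"
  unfolding PQ_def ctrace_def matrix_matrix_mult_def
  by (simp add: right_diff_distrib sum_subtractf)

lemma kron_scaleR_left: "kron (c *\<^sub>R A) B = c *\<^sub>R kron A B"
  unfolding kron_def vec_eq_iff by (simp add: scaleR_complex)

lemma kron_scaleR_right: "kron A (c *\<^sub>R B) = c *\<^sub>R kron A B"
  unfolding kron_def vec_eq_iff by (simp add: scaleR_complex)

lemma kron_add_left: "kron (A + A') B = kron A B + kron A' B"
  unfolding kron_def vec_eq_iff by (simp add: algebra_simps)

lemma kron_add_right: "kron A (B + B') = kron A B + kron A B'"
  unfolding kron_def vec_eq_iff by (simp add: algebra_simps)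

lemma bounded_linear_kron_left: "bounded_linear (\<lambda>A. kron A C)"
  unfolding linear_conv_bounded_linear[symmetric]
  by (intro linearI) (simp_all add: kron_add_left kron_scaleR_left)

lemmas sums_kron_left = bounded_linear.sums[OF bounded_linear_kron_left]

text \<open>Alice's unnormalised conditional operator Tr_B[(I \<otimes> E) \<rho>] for a Bob effect E.\<close>
definition assemblage :: "cmat4 \<Rightarrow> cmat2 \<Rightarrow> cmat2" where
  "assemblage \<rho> E = (\<chi> j i. \<Sum>k\<in>UNIV. \<Sum>k'\<in>UNIV. \<rho> $ (j,k') $ (i,k) * E $ k $ k')"

lemma Pjoint_eq_PQ_assemblage: "Pjoint M E \<rho> = PQ (assemblage \<rho> E) M"
proof -
  have "ctrace (kron M E ** \<rho>) = ctrace (assemblage \<rho> E ** M)"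
    unfolding ctrace_def matrix_matrix_mult_def assemblage_def kron_def
    by (simp add: sum_2 sum_UNIV_2x2 sum_distrib_right ring_distribs mult_ac add_ac)
  then show ?thesis unfolding Pjoint_def PQ_def by simp
qed

lemma hermitian_assemblage:
  assumes "hermitian \<rho>" "hermitian E"
  shows "hermitian (assemblage \<rho> E)"
  unfolding hermitian_def
proof (intro allI)
  fix i j
  have \<rho>: "\<rho> $ q $ p = cnj (\<rho> $ p $ q)" for p q
    using assms(1) unfolding hermitian_def by blast
  have E: "E $ q $ p = cnj (E $ p $ q)" for p q
    using assms(2) unfolding hermitian_def by blast
  have "assemblage \<rho> E $ j $ i
      = cnj (\<Sum>k\<in>UNIV. \<Sum>k'\<in>UNIV. \<rho> $ (i,k) $ (j,k') * E $ k' $ k)"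
    unfolding assemblage_def vec_lambda_beta by (subst \<rho>, subst E) simp
  also have "(\<Sum>k\<in>UNIV. \<Sum>k'\<in>UNIV. \<rho> $ (i,k) $ (j,k') * E $ k' $ k) = assemblage \<rho> E $ i $ j"
    unfolding assemblage_def vec_lambda_beta by (rule sum.swap)
  finally show "assemblage \<rho> E $ j $ i = cnj (assemblage \<rho> E $ i $ j)" .
qed

lemma assemblage_diff: "assemblage \<rho> (A - B) = assemblage \<rho> A - assemblage \<rho> B"
  unfolding assemblage_def vec_eq_iff by (simp add: sum_subtractf algebra_simps)

lemma assemblage_mat1: "assemblage \<rho> (mat 1) = ptraceB \<rho>"
  unfolding assemblage_def ptraceB_def vec_eq_iff by (simp add: mat_def sum_2)

lemma pauli_expansion_right:
  "\<rho> = (1/2::real) *\<^sub>R (kron (assemblage \<rho> (mat 1)) (mat 1) + kron (assemblage \<rho> sx) sx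
        + kron (assemblage \<rho> sy) sy + kron (assemblage \<rho> sz) sz)"
  unfolding vec_eq_iff all_2x2
  by (simp add: kron_def assemblage_def sum_2 mat_def sx_def sy_def sz_def algebra_simps
      scaleR_complex)

subsection \<open>Unsteerability implies separability of the mixed state\<close>

definition lhs_model_BA ::
    "(nat \<Rightarrow> real) \<Rightarrow> (nat \<Rightarrow> cmat2) \<Rightarrow> (nat \<Rightarrow> (nat \<Rightarrow> cmat2) \<Rightarrow> nat \<Rightarrow> nat \<Rightarrow> real) \<Rightarrow> cmat4 \<Rightarrow> bool"
  where "lhs_model_BA P \<sigma> r \<rho> \<longleftrightarrow>
     (\<forall>nA MA nB MB a b. povm nA MA \<longrightarrow> povm nB MB \<longrightarrow> a < nA \<longrightarrow> b < nB \<longrightarrow>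
        (\<lambda>l. P l * PQ (\<sigma> l) (MA a) * r nB MB b l) sums Pjoint (MA a) (MB b) \<rho>)"

lemma not_steerable_BA_iff:
  "not_steerable_BA \<rho> \<longleftrightarrow>
     (\<exists>P \<sigma> r. hv_dist P \<and> (\<forall>l. density (\<sigma> l)) \<and> response r \<and> lhs_model_BA P \<sigma> r \<rho>)"
  unfolding not_steerable_BA_def lhs_model_BA_def ..

lemma lhs_model_BA_sums_assemblage:
  assumes "hermitian \<rho>" "\<forall>l. density (\<sigma> l)" "lhs_model_BA P \<sigma> r \<rho>"
    and E: "povm nB MB" "b < nB"
  shows "(\<lambda>l. (P l * r nB MB b l) *\<^sub>R \<sigma> l) sums assemblage \<rho> (MB b)"
proof -
  let ?c = "\<lambda>l. P l * r nB MB b l" and ?A = "assemblage \<rho> (MB b)"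
  have model: "povm nA MA \<Longrightarrow> a < nA \<Longrightarrow> (\<lambda>l. ?c l * PQ (\<sigma> l) (MA a)) sums PQ ?A (MA a)"
    for nA MA a
    using assms(3) E unfolding lhs_model_BA_def Pjoint_eq_PQ_assemblage by (simp add: mult_ac)
  have pauli: "(\<lambda>l. ?c l * PQ (\<sigma> l) S) sums PQ ?A S"
    if "psd (proj S)" "psd (mat 1 - proj S)" for S
    using sums_diff[OF model[OF povm_two_outcome[OF that], of 0] model[OF povm_two_outcome[OF that], of 1]]
    by (simp add: two_outcome_def proj_diff flip: right_diff_distrib PQ_diff)
  have hermitian_E: "hermitian (MB b)"
    using E psd_imp_hermitian unfolding povm_def by blast
  have "hermitian (\<sigma> l)" for l
    using assms(2) psd_imp_hermitian unfolding density_def by blast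
  then have "?c l *\<^sub>R \<sigma> l = bloch_op (?c l * PQ (\<sigma> l) (mat 1))
      (?c l * PQ (\<sigma> l) sx) (?c l * PQ (\<sigma> l) sy) (?c l * PQ (\<sigma> l) sz)" for l
    by (subst hermitian_eq_bloch_op[of "\<sigma> l"]) (simp_all add: scaleR_bloch_op)
  moreover have "(\<lambda>l. bloch_op (?c l * PQ (\<sigma> l) (mat 1)) (?c l * PQ (\<sigma> l) sx)
      (?c l * PQ (\<sigma> l) sy) (?c l * PQ (\<sigma> l) sz))
      sums bloch_op (PQ ?A (mat 1)) (PQ ?A sx) (PQ ?A sy) (PQ ?A sz)"
    by (intro bloch_op_sums pauli psd_proj_pauli model[OF povm_trivial]) simp
  moreover have "bloch_op (PQ ?A (mat 1)) (PQ ?A sx) (PQ ?A sy) (PQ ?A sz) = ?A"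
    by (intro hermitian_eq_bloch_op[symmetric] hermitian_assemblage assms(1) hermitian_E)
  ultimately show ?thesis
    by simp
qed

lemma kron_bloch_op_right:
  "kron A (bloch_op t x y z)
     = (1/2::real) *\<^sub>R (t *\<^sub>R kron A (mat 1) + x *\<^sub>R kron A sx + y *\<^sub>R kron A sy + z *\<^sub>R kron A sz)"
  by (simp add: bloch_op_def kron_add_right kron_scaleR_right)

lemma mix_with_ptraceB_pauli:
  "\<mu> *\<^sub>R \<rho> + (1 - \<mu>) *\<^sub>R kron (ptraceB \<rho>) ((1/2) *\<^sub>R mat 1)
     = (1/2::real) *\<^sub>R (kron (ptraceB \<rho>) (mat 1)
         + \<mu> *\<^sub>R (kron (assemblage \<rho> sx) sx + kron (assemblage \<rho> sy) sy + kron (assemblage \<rho> sz) sz))"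
  (is "_ = (1/2::real) *\<^sub>R (?A + \<mu> *\<^sub>R ?K)")
proof -
  have "\<rho> = (1/2::real) *\<^sub>R (?A + ?K)"
    using pauli_expansion_right[of \<rho>] by (simp add: assemblage_mat1 add.assoc)
  from arg_cong[where f = "scaleR \<mu>", OF this]
  have "\<mu> *\<^sub>R \<rho> = (\<mu> / 2) *\<^sub>R ?A + (\<mu> / 2) *\<^sub>R ?K"
    by (simp only: scaleR_add_right scaleR_scaleR) simp
  moreover have "(1 - \<mu>) *\<^sub>R kron (ptraceB \<rho>) ((1/2) *\<^sub>R mat 1) = ((1 - \<mu>) / 2) *\<^sub>R ?A"
    by (simp add: kron_scaleR_right)
  moreover have "(\<mu> / 2) *\<^sub>R ?A + ((1 - \<mu>) / 2) *\<^sub>R ?A = (1/2::real) *\<^sub>R ?A"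
    by (simp flip: scaleR_add_left add_divide_distrib)
  ultimately show ?thesis
    by (simp add: scaleR_add_right add_ac)
qed

lemma scaled_cube_in_unit_ball:
  fixes \<mu> x y z :: real
  assumes "0 \<le> \<mu>" "\<mu> \<le> 1 / sqrt 3" "\<bar>x\<bar> \<le> 1" "\<bar>y\<bar> \<le> 1" "\<bar>z\<bar> \<le> 1"
  shows "(\<mu> * x)\<^sup>2 + (\<mu> * y)\<^sup>2 + (\<mu> * z)\<^sup>2 \<le> 1"
proof -
  have "\<mu>\<^sup>2 \<le> (1 / sqrt 3)\<^sup>2"
    using assms(1,2) by (intro power_mono) auto
  then have "\<mu>\<^sup>2 \<le> 1 / 3"
    by (simp add: power_divide)
  moreover have "x\<^sup>2 \<le> 1" "y\<^sup>2 \<le> 1" "z\<^sup>2 \<le> 1"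
    using assms(3-5) by (simp_all add: abs_square_le_1)
  then have "x\<^sup>2 + y\<^sup>2 + z\<^sup>2 \<le> 3"
    by linarith
  ultimately have "\<mu>\<^sup>2 * (x\<^sup>2 + y\<^sup>2 + z\<^sup>2) \<le> 1 / 3 * 3"
    by (intro mult_mono) auto
  then show ?thesis
    by (simp add: power_mult_distrib algebra_simps)
qed

text \<open>Expected \<plusminus>1 outcome of Bob's projective measurement of S at hidden state l.\<close>
definition pauli_response :: "(nat \<Rightarrow> (nat \<Rightarrow> cmat2) \<Rightarrow> nat \<Rightarrow> nat \<Rightarrow> real) \<Rightarrow> cmat2 \<Rightarrow> nat \<Rightarrow> real"
  where "pauli_response r S l = r 2 (two_outcome (proj S)) 0 l - r 2 (two_outcome (proj S)) 1 l"

lemma abs_pauli_response_le_1: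
  assumes "response r" "psd (proj S)" "psd (mat 1 - proj S)"
  shows "\<bar>pauli_response r S l\<bar> \<le> 1"
proof -
  have "(\<forall>b<2. 0 \<le> r 2 (two_outcome (proj S)) b l) \<and> (\<Sum>b<2. r 2 (two_outcome (proj S)) b l) = 1"
    using assms povm_two_outcome unfolding response_def by blast
  then have "0 \<le> r 2 (two_outcome (proj S)) 0 l" "0 \<le> r 2 (two_outcome (proj S)) 1 l"
      "r 2 (two_outcome (proj S)) 0 l + r 2 (two_outcome (proj S)) 1 l = 1"
    by (simp_all add: numeral_2_eq_2)
  then show ?thesis
    unfolding pauli_response_def by linarith
qed

lemma not_steerable_BA_imp_separable:
  assumes "hermitian \<rho>" "0 \<le> \<mu>" "\<mu> \<le> 1 / sqrt 3" "not_steerable_BA \<rho>"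
  shows "separable (\<mu> *\<^sub>R \<rho> + (1 - \<mu>) *\<^sub>R kron (ptraceB \<rho>) ((1/2) *\<^sub>R mat 1))"
proof -
  obtain P \<sigma> r where hv: "hv_dist P" and \<sigma>: "\<forall>l. density (\<sigma> l)" and r: "response r"
    and model: "lhs_model_BA P \<sigma> r \<rho>"
    using assms(4) unfolding not_steerable_BA_iff by blast
  let ?s = "pauli_response r"
  have "r 1 (\<lambda>_. mat 1) 0 l = 1" for l
    using r povm_trivial unfolding response_def by fastforce
  then have sums_A: "(\<lambda>l. P l *\<^sub>R \<sigma> l) sums ptraceB \<rho>"
    using lhs_model_BA_sums_assemblage[OF assms(1) \<sigma> model povm_trivial, of 0]
    by (simp add: assemblage_mat1)
  have sums_S: "(\<lambda>l. (P l * ?s S l) *\<^sub>R \<sigma> l) sums assemblage \<rho> S"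
    if "psd (proj S)" "psd (mat 1 - proj S)" for S
    using sums_diff[OF lhs_model_BA_sums_assemblage[OF assms(1) \<sigma> model povm_two_outcome[OF that], of 0]
        lhs_model_BA_sums_assemblage[OF assms(1) \<sigma> model povm_two_outcome[OF that], of 1]]
    by (simp add: two_outcome_def pauli_response_def proj_diff scaleR_diff_left right_diff_distrib
        flip: assemblage_diff)
  define bob where "bob l = bloch_op 1 (\<mu> * ?s sx l) (\<mu> * ?s sy l) (\<mu> * ?s sz l)" for l
  have "density (bob l)" for l
    unfolding bob_def
    by (intro density_bloch_op scaled_cube_in_unit_ball assms(2,3) abs_pauli_response_le_1 r psd_proj_pauli)
  moreover have "P l *\<^sub>R kron (\<sigma> l) (bob l) = (1/2::real) *\<^sub>R (kron (P l *\<^sub>R \<sigma> l) (mat 1)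
      + \<mu> *\<^sub>R (kron ((P l * ?s sx l) *\<^sub>R \<sigma> l) sx + kron ((P l * ?s sy l) *\<^sub>R \<sigma> l) sy
        + kron ((P l * ?s sz l) *\<^sub>R \<sigma> l) sz))" for l
    by (simp add: bob_def kron_bloch_op_right kron_scaleR_left scaleR_add_right mult_ac)
  then have "(\<lambda>l. P l *\<^sub>R kron (\<sigma> l) (bob l))
      sums (\<mu> *\<^sub>R \<rho> + (1 - \<mu>) *\<^sub>R kron (ptraceB \<rho>) ((1/2) *\<^sub>R mat 1))"
    unfolding mix_with_ptraceB_pauli
    by (simp only:) (intro sums_scaleR_right sums_add sums_kron_left sums_A sums_S psd_proj_pauli)
  ultimately show ?thesis
    unfolding separable_def using hv \<sigma> by blast
qed

subsection \<open>Exchanging the parties\<close>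

definition swap_parties :: "cmat4 \<Rightarrow> cmat4" where
  "swap_parties X = (\<chi> p q. X $ prod.swap p $ prod.swap q)"

lemma swap_parties_swap_parties [simp]: "swap_parties (swap_parties X) = X"
  unfolding swap_parties_def vec_eq_iff by simp

lemma swap_parties_add: "swap_parties (X + Y) = swap_parties X + swap_parties Y"
  unfolding swap_parties_def vec_eq_iff by simp

lemma swap_parties_scaleR: "swap_parties (c *\<^sub>R X) = c *\<^sub>R swap_parties X"
  unfolding swap_parties_def vec_eq_iff by simp

lemma swap_parties_kron: "swap_parties (kron A B) = kron B A"
  unfolding swap_parties_def kron_def vec_eq_iff by (simp add: mult.commute)

lemma ptraceB_swap_parties: "ptraceB (swap_parties X) = ptraceA X"
  unfolding swap_parties_def ptraceB_def ptraceA_def vec_eq_iff by simp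

lemma hermitian_swap_parties: "hermitian X \<Longrightarrow> hermitian (swap_parties X)"
  unfolding swap_parties_def hermitian_def vec_lambda_beta by blast

lemma Pjoint_swap_parties: "Pjoint A B (swap_parties X) = Pjoint B A X"
proof -
  have swap: "(\<Sum>p\<in>(UNIV :: (2 \<times> 2) set). f p) = (\<Sum>p\<in>UNIV. f (prod.swap p))" for f :: "_ \<Rightarrow> complex"
    by (rule sum.reindex_bij_witness[where i = prod.swap and j = prod.swap]) auto
  have "ctrace (kron A B ** swap_parties X)
      = (\<Sum>p\<in>UNIV. \<Sum>q\<in>UNIV. kron A B $ p $ q * X $ prod.swap q $ prod.swap p)"
    unfolding ctrace_def matrix_matrix_mult_def swap_parties_def by simp
  also have "\<dots> = (\<Sum>p\<in>UNIV. \<Sum>q\<in>UNIV. kron A B $ prod.swap p $ prod.swap q * X $ q $ p)"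
    by (subst swap, subst (2) swap) simp
  also have "\<dots> = ctrace (kron B A ** X)"
    unfolding ctrace_def matrix_matrix_mult_def kron_def by (simp add: mult.commute)
  finally show ?thesis
    unfolding Pjoint_def by simp
qed

lemma separable_swap_partiesD:
  assumes "separable (swap_parties X)"
  shows "separable X"
proof -
  obtain P \<sigma>A \<sigma>B where "hv_dist P" "\<forall>l. density (\<sigma>A l)" "\<forall>l. density (\<sigma>B l)"
    and sums: "(\<lambda>l. P l *\<^sub>R kron (\<sigma>A l) (\<sigma>B l)) sums swap_parties X"
    using assms unfolding separable_def by blast
  have "bounded_linear swap_parties"
    unfolding linear_conv_bounded_linear[symmetric]
    by (intro linearI) (simp_all add: swap_parties_add swap_parties_scaleR)
  from bounded_linear.sums[OF this sums]
  have "(\<lambda>l. P l *\<^sub>R kron (\<sigma>B l) (\<sigma>A l)) sums X"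
    by (simp add: swap_parties_scaleR swap_parties_kron)
  with \<open>hv_dist P\<close> \<open>\<forall>l. density (\<sigma>A l)\<close> \<open>\<forall>l. density (\<sigma>B l)\<close> show ?thesis
    unfolding separable_def by blast
qed

lemma not_steerable_AB_imp_not_steerable_BA_swap:
  assumes "not_steerable_AB \<rho>"
  shows "not_steerable_BA (swap_parties \<rho>)"
proof -
  obtain P \<sigma> r where "hv_dist P" "\<forall>l. density (\<sigma> l)" "response r" and
    model: "\<forall>nA MA nB MB a b. povm nA MA \<longrightarrow> povm nB MB \<longrightarrow> a < nA \<longrightarrow> b < nB \<longrightarrow>
        (\<lambda>l. P l * r nA MA a l * PQ (\<sigma> l) (MB b)) sums Pjoint (MA a) (MB b) \<rho>"
    using assms unfolding not_steerable_AB_def by blast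
  moreover have "lhs_model_BA P \<sigma> r (swap_parties \<rho>)"
    unfolding lhs_model_BA_def Pjoint_swap_parties
    using model by (simp add: mult_ac)
  ultimately show ?thesis
    unfolding not_steerable_BA_iff by blast
qed

lemma not_steerable_AB_imp_separable:
  assumes "hermitian \<rho>" "0 \<le> \<mu>" "\<mu> \<le> 1 / sqrt 3" "not_steerable_AB \<rho>"
  shows "separable (\<mu> *\<^sub>R \<rho> + (1 - \<mu>) *\<^sub>R kron ((1/2) *\<^sub>R mat 1) (ptraceA \<rho>))"
proof (rule separable_swap_partiesD)
  show "separable (swap_parties (\<mu> *\<^sub>R \<rho> + (1 - \<mu>) *\<^sub>R kron ((1/2) *\<^sub>R mat 1) (ptraceA \<rho>)))"
    using not_steerable_BA_imp_separable[OF hermitian_swap_parties[OF assms(1)] assms(2,3)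
        not_steerable_AB_imp_not_steerable_BA_swap[OF assms(4)]]
    by (simp add: swap_parties_add swap_parties_scaleR swap_parties_kron ptraceB_swap_parties)
qed

theorem theorem1:
  fixes \<rho> :: cmat4 and \<mu>1 \<mu>2 :: real
  assumes "density \<rho>"
    and "0 \<le> \<mu>1" "\<mu>1 \<le> 1 / sqrt 3"
    and "0 \<le> \<mu>2" "\<mu>2 \<le> 1 / sqrt 3"
  shows "(entangled (\<mu>1 *\<^sub>R \<rho> + (1 - \<mu>1) *\<^sub>R kron (ptraceB \<rho>) ((1/2) *\<^sub>R mat 1))
            \<longrightarrow> steerable_BA \<rho>)
       \<and> (entangled (\<mu>2 *\<^sub>R \<rho> + (1 - \<mu>2) *\<^sub>R kron ((1/2) *\<^sub>R mat 1) (ptraceA \<rho>))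
            \<longrightarrow> steerable_AB \<rho>)"
proof -
  have "hermitian \<rho>"
    using assms(1) psd_imp_hermitian unfolding density_def by blast
  then show ?thesis
    using not_steerable_BA_imp_separable[of \<rho> \<mu>1] not_steerable_AB_imp_separable[of \<rho> \<mu>2] assms(2-5)
    unfolding entangled_def steerable_BA_def steerable_AB_def by blast
qed

end
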